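(* Let $f,g:\mathbb{R}^{N}\rightarrow [-\infty ,\infty ]$ be Borel measurable with $g\geq 0$, $f\not\equiv \infty$ and $g\not\equiv\infty$, so that $0\leq m_{f_{+}}+m_{g}<\infty$, where $f_{+}:=\max\{f,0\}$, $m_{f_+}:=\inf f_+$, $m_g:=\inf g$. Set $m_{f_{+},g}:=(m_{f_{+}}-m_{g})/2$. Then $f_{+}-m_{f_{+},g}$, $g+m_{f_{+},g}$ and $f\veebar g$ are measurable and nonnegative, and $$\|(f_{+}-m_{f_{+},g})^{-1}\|_{\phi }+\|(g+m_{f_{+},g})^{-1}\|_{\phi }\leq 4\|(f\veebar g)^{-1}\|_{\phi }$$ for every Young function $\phi$.
   Context: $(f\veebar g)(x):=\inf_{y\in\mathbb{R}^N}\max\{f(x-y),g(y)\}$. For $h\ge0$, $h^{-1}:=1/h$ (with $1/0=\infty$, $1/\infty=0$). A Young function is a nonconstant $\phi:[0,\infty]\to[0,\infty]$ with $\phi(0)=0$, nondecreasing, convex and left continuous; the Luxemburg norm of a measurable $h$ is $\|h\|_{\phi}:=\inf\{r>0:\int_{\mathbb{R}^N}\phi(r^{-1}|h|)\le 1\}$ ($=\infty$ if no such $r$). Measurability means Lebesgue measurability. *)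

theory Defs
  imports "HOL-Analysis.Analysis"
begin

definition maxconv :: "('a::euclidean_space \<Rightarrow> ereal) \<Rightarrow> ('a \<Rightarrow> ereal) \<Rightarrow> 'a \<Rightarrow> ereal" where
  "maxconv f g x = (INF y. max (f (x - y)) (g y))"

text \<open>Reciprocal of a nonnegative extended real: ereal inverse has 1/0 = \<infinity>, 1/\<infinity> = 0;
  the result is viewed in [0,\<infinity>] (ennreal).\<close>
definition recip :: "ereal \<Rightarrow> ennreal" where
  "recip h = e2ennreal (inverse h)"

definition young :: "(ennreal \<Rightarrow> ennreal) \<Rightarrow> bool" where
  "young \<phi> \<longleftrightarrow>
     (\<exists>a b. \<phi> a \<noteq> \<phi> b) \<and> \<phi> 0 = 0 \<and> mono \<phi> \<and>
     (\<forall>a b. \<forall>t::real. 0 \<le> t \<and> t \<le> 1 \<longrightarrow>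
        \<phi> (ennreal t * a + ennreal (1 - t) * b) \<le> ennreal t * \<phi> a + ennreal (1 - t) * \<phi> b) \<and>
     (\<forall>x. continuous (at_left x) \<phi>)"

text \<open>Luxemburg norm w.r.t. Lebesgue measure; Inf of the empty set is \<infinity>.\<close>
definition luxemburg :: "(ennreal \<Rightarrow> ennreal) \<Rightarrow> ('a::euclidean_space \<Rightarrow> ennreal) \<Rightarrow> ennreal" where
  "luxemburg \<phi> h =
     Inf (ennreal ` {r::real. r > 0 \<and> (\<integral>\<^sup>+ x. \<phi> (ennreal (1 / r) * h x) \<partial>lebesgue) \<le> 1})"

end

theory Submission
  imports Defs
begin

text \<open>
  Since \<open>(f \<veebar> g)(x + t) \<le> max (f x) (g t)\<close>, translating by a point \<open>t\<close> where \<open>g\<close> is within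
  \<open>\<epsilon>\<close> of its infimum gives \<open>(f \<veebar> g)(x + t) \<le> 2 (f\<^sub>+ x - m\<^sub>f\<^sub>+\<^sub>,\<^sub>g) + \<epsilon>\<close>, and
  symmetrically for \<open>g + m\<^sub>f\<^sub>+\<^sub>,\<^sub>g\<close>. Passing to reciprocals, translation invariance of
  Lebesgue measure and left continuity of \<open>\<phi>\<close> (to let \<open>\<epsilon> \<rightarrow> 0\<close>) give
  \<open>\<parallel>(f\<^sub>+ - m\<^sub>f\<^sub>+\<^sub>,\<^sub>g)\<^sup>-\<^sup>1\<parallel>\<^sub>\<phi> \<le> 2 \<parallel>(f \<veebar> g)\<^sup>-\<^sup>1\<parallel>\<^sub>\<phi>\<close>, and likewise for \<open>g\<close>.

  The delicate point is the measurability of \<open>f \<veebar> g\<close>: its strict sublevel sets are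
  sums \<open>A + B\<close> of Borel sets, which need not be Borel. They are Suslin sets (images of
  the Suslin operation applied to compact sets), and Suslin sets are Lebesgue measurable
  because they can be approximated from inside by closed sets: restricting the indices
  to bounded branches keeps most of the outer measure, and Koenig's lemma shows that the
  resulting compact sets stay inside the set.
\<close>

section \<open>Suslin sets\<close>

definition seq_prefix :: "(nat \<Rightarrow> nat) \<Rightarrow> nat \<Rightarrow> nat list" where
  "seq_prefix \<sigma> n = map \<sigma> [0..<n]"

definition suslin :: "'a::euclidean_space set \<Rightarrow> bool" where
  "suslin E \<longleftrightarrow> (\<exists>K. (\<forall>s. compact (K s)) \<and> E = (\<Union>\<sigma>. \<Inter>n. K (seq_prefix \<sigma> (Suc n))))"

lemma length_seq_prefix [simp]: "length (seq_prefix \<sigma> n) = n"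
  by (simp add: seq_prefix_def)

lemma take_seq_prefix: "j \<le> n \<Longrightarrow> take j (seq_prefix \<sigma> n) = seq_prefix \<sigma> j"
  by (simp add: seq_prefix_def take_map)

lemma map_seq_prefix: "map f (seq_prefix \<sigma> n) = seq_prefix (f \<circ> \<sigma>) n"
  by (simp add: seq_prefix_def)

lemma seq_prefix_Suc_Cons: "seq_prefix \<sigma> (Suc n) = \<sigma> 0 # map \<sigma> [Suc 0..<Suc n]"
  by (simp del: upt_Suc add: seq_prefix_def upt_conv_Cons)

lemma suslin_compact: "compact C \<Longrightarrow> suslin C"
  unfolding suslin_def by (rule exI[of _ "\<lambda>_. C"]) auto

lemma suslin_Union:
  assumes "\<And>i::nat. suslin (A i)"
  shows "suslin (\<Union>i. A i)"
proof -
  from assms obtain K where K: "\<And>i s. compact (K i s)"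
    and A: "\<And>i. A i = (\<Union>\<sigma>. \<Inter>n. K i (seq_prefix \<sigma> (Suc n)))"
    unfolding suslin_def by metis
  \<comment> \<open>The first entry of the index sequence encodes both the set \<open>A i\<close> and the first index in it.\<close>
  define K' where "K' s = K (fst (prod_decode (hd s))) (snd (prod_decode (hd s)) # tl s)" for s
  have K'_seq_prefix: "K' (seq_prefix \<sigma> (Suc n)) =
      K (fst (prod_decode (\<sigma> 0))) (seq_prefix (\<sigma>(0 := snd (prod_decode (\<sigma> 0)))) (Suc n))" for \<sigma> n
  proof -
    have "map (\<sigma>(0 := v)) [Suc 0..<Suc n] = map \<sigma> [Suc 0..<Suc n]" for v
      by (rule map_cong) auto
    then show ?thesis
      unfolding K'_def seq_prefix_Suc_Cons by simp
  qed
  have "(\<Union>i. A i) = (\<Union>\<sigma>. \<Inter>n. K' (seq_prefix \<sigma> (Suc n)))"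
  proof (intro equalityI subsetI)
    fix x assume "x \<in> (\<Union>i. A i)"
    then obtain i \<tau> where x: "\<And>n. x \<in> K i (seq_prefix \<tau> (Suc n))" by (auto simp: A)
    define \<sigma> where "\<sigma> = \<tau>(0 := prod_encode (i, \<tau> 0))"
    have "\<sigma>(0 := snd (prod_decode (\<sigma> 0))) = \<tau>" "fst (prod_decode (\<sigma> 0)) = i"
      by (auto simp: \<sigma>_def)
    with x show "x \<in> (\<Union>\<sigma>. \<Inter>n. K' (seq_prefix \<sigma> (Suc n)))"
      by (auto simp: K'_seq_prefix)
  next
    fix x assume "x \<in> (\<Union>\<sigma>. \<Inter>n. K' (seq_prefix \<sigma> (Suc n)))"
    then show "x \<in> (\<Union>i. A i)"
      by (auto simp: K'_seq_prefix A)
  qed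
  moreover have "compact (K' s)" for s
    unfolding K'_def using K by blast
  ultimately show ?thesis
    unfolding suslin_def by blast
qed

lemma suslin_Inter:
  assumes "\<And>i::nat. suslin (A i)"
  shows "suslin (\<Inter>i. A i)"
proof -
  from assms obtain K where K: "\<And>i s. compact (K i s)"
    and A: "\<And>i. A i = (\<Union>\<sigma>. \<Inter>n. K i (seq_prefix \<sigma> (Suc n)))"
    unfolding suslin_def by metis
  \<comment> \<open>A single index sequence \<open>\<sigma>\<close> interleaves the sequences \<open>\<sigma> (prod_encode (i, _))\<close> for all \<open>i\<close>;
    the node of length \<open>prod_encode (i, n) + 1\<close> is sent to the \<open>n + 1\<close>-th node of the \<open>i\<close>-th scheme.\<close>
  define sub where "sub \<sigma> i j = \<sigma> (prod_encode (i, j))" for \<sigma> :: "nat \<Rightarrow> nat" and i j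
  define K' where "K' s = (let (i, n) = prod_decode (length s - 1)
     in K i (map (\<lambda>j. s ! prod_encode (i, j)) [0..<Suc n]))" for s
  have K'_seq_prefix: "K' (seq_prefix \<sigma> (Suc (prod_encode (i, n)))) = K i (seq_prefix (sub \<sigma> i) (Suc n))"
    for \<sigma> i n
  proof -
    have "prod_encode (i, j) < Suc (prod_encode (i, n))" if "j \<le> n" for j
      using that by (simp add: prod_encode_def triangle_def le_imp_less_Suc add_mono div_le_mono mult_le_mono)
    then have "map (\<lambda>j. seq_prefix \<sigma> (Suc (prod_encode (i, n))) ! prod_encode (i, j)) [0..<Suc n]
        = seq_prefix (sub \<sigma> i) (Suc n)"
      by (auto simp: seq_prefix_def sub_def simp del: upt_Suc)
    then show ?thesis
      by (simp add: K'_def)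
  qed
  have branch: "(\<forall>N. x \<in> K' (seq_prefix \<sigma> (Suc N))) \<longleftrightarrow> (\<forall>i n. x \<in> K i (seq_prefix (sub \<sigma> i) (Suc n)))"
    for x \<sigma>
    by (metis K'_seq_prefix prod_decode_inverse surj_pair)
  have "(\<Inter>i. A i) = (\<Union>\<sigma>. \<Inter>n. K' (seq_prefix \<sigma> (Suc n)))"
  proof (intro equalityI subsetI)
    fix x assume "x \<in> (\<Inter>i. A i)"
    then have "\<forall>i. \<exists>\<tau>. \<forall>n. x \<in> K i (seq_prefix \<tau> (Suc n))"
      by (auto simp: A)
    then obtain \<tau> where \<tau>: "\<And>i n. x \<in> K i (seq_prefix (\<tau> i) (Suc n))"
      by metis
    define \<sigma> where "\<sigma> N = \<tau> (fst (prod_decode N)) (snd (prod_decode N))" for N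
    have "sub \<sigma> i = \<tau> i" for i
      by (simp add: sub_def \<sigma>_def fun_eq_iff)
    with \<tau> have "\<forall>N. x \<in> K' (seq_prefix \<sigma> (Suc N))"
      by (simp add: branch)
    then show "x \<in> (\<Union>\<sigma>. \<Inter>n. K' (seq_prefix \<sigma> (Suc n)))"
      by blast
  next
    fix x assume "x \<in> (\<Union>\<sigma>. \<Inter>n. K' (seq_prefix \<sigma> (Suc n)))"
    then obtain \<sigma> where "\<forall>N. x \<in> K' (seq_prefix \<sigma> (Suc N))"
      by blast
    then have "\<forall>i n. x \<in> K i (seq_prefix (sub \<sigma> i) (Suc n))"
      by (simp add: branch)
    then show "x \<in> (\<Inter>i. A i)"
      by (auto simp: A)
  qed
  moreover have "compact (K' s)" for s
    unfolding K'_def using K by (simp add: case_prod_beta)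
  ultimately show ?thesis
    unfolding suslin_def by blast
qed

text \<open>The factor \<open>K (take 1 s)\<close> matters only for \<open>s = []\<close>, where it keeps \<open>prefix_Int K s\<close> compact.\<close>

definition prefix_Int :: "(nat list \<Rightarrow> 'a set) \<Rightarrow> nat list \<Rightarrow> 'a set" where
  "prefix_Int K s = K (take 1 s) \<inter> (\<Inter>j\<in>{1..length s}. K (take j s))"

lemma compact_prefix_Int:
  fixes K :: "nat list \<Rightarrow> 'a::euclidean_space set"
  assumes "\<And>s. compact (K s)"
  shows "compact (prefix_Int K s)"
  unfolding prefix_Int_def using assms by (intro compact_Int_closed closed_INT) (auto intro: compact_imp_closed)

lemma prefix_Int_seq_prefix:
  "prefix_Int K (seq_prefix \<sigma> (Suc n)) = (\<Inter>j\<in>{1..Suc n}. K (seq_prefix \<sigma> j))"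
  unfolding prefix_Int_def by (auto simp: take_seq_prefix simp del: upt_Suc)

lemma suslin_prefix_Int:
  "(\<Inter>n. prefix_Int K (seq_prefix \<sigma> (Suc n))) = (\<Inter>n. K (seq_prefix \<sigma> (Suc n)))"
proof (intro equalityI subsetI)
  fix x assume x: "x \<in> (\<Inter>n. prefix_Int K (seq_prefix \<sigma> (Suc n)))"
  have "x \<in> K (seq_prefix \<sigma> (Suc n))" for n
  proof -
    have "x \<in> (\<Inter>j\<in>{1..Suc n}. K (seq_prefix \<sigma> j))"
      using x by (simp only: prefix_Int_seq_prefix) blast
    then show ?thesis
      by simp
  qed
  then show "x \<in> (\<Inter>n. K (seq_prefix \<sigma> (Suc n)))"
    by blast
next
  fix x assume x: "x \<in> (\<Inter>n. K (seq_prefix \<sigma> (Suc n)))"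
  have "x \<in> K (seq_prefix \<sigma> j)" if j: "j \<in> {1..Suc n}" for j n
  proof -
    obtain k where "j = Suc k"
      using j by (cases j) auto
    then show ?thesis
      using x by blast
  qed
  then show "x \<in> (\<Inter>n. prefix_Int K (seq_prefix \<sigma> (Suc n)))"
    by (simp only: prefix_Int_seq_prefix) blast
qed

lemma suslin_decseq_scheme:
  assumes "suslin A"
  obtains K where "\<And>s. compact (K s)"
    and "\<And>\<sigma> n. K (seq_prefix \<sigma> (Suc (Suc n))) \<subseteq> K (seq_prefix \<sigma> (Suc n))"
    and "A = (\<Union>\<sigma>. \<Inter>n. K (seq_prefix \<sigma> (Suc n)))"
proof -
  from assms obtain K where K: "\<And>s. compact (K s)" and A: "A = (\<Union>\<sigma>. \<Inter>n. K (seq_prefix \<sigma> (Suc n)))"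
    unfolding suslin_def by blast
  show ?thesis
  proof (rule that)
    show "compact (prefix_Int K s)" for s
      using K by (rule compact_prefix_Int)
    show "prefix_Int K (seq_prefix \<sigma> (Suc (Suc n))) \<subseteq> prefix_Int K (seq_prefix \<sigma> (Suc n))" for \<sigma> n
      unfolding prefix_Int_seq_prefix by auto
    show "A = (\<Union>\<sigma>. \<Inter>n. prefix_Int K (seq_prefix \<sigma> (Suc n)))"
      unfolding A suslin_prefix_Int ..
  qed
qed

lemma Inter_sums_decseq_compact:
  fixes P Q :: "nat \<Rightarrow> 'a::euclidean_space set"
  assumes "\<And>n. compact (P n)" "\<And>n. compact (Q n)"
    and "\<And>n. P (Suc n) \<subseteq> P n" "\<And>n. Q (Suc n) \<subseteq> Q n"
  shows "(\<Inter>n. {a + b | a b. a \<in> P n \<and> b \<in> Q n}) = {a + b | a b. a \<in> (\<Inter>n. P n) \<and> b \<in> (\<Inter>n. Q n)}"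
proof (intro equalityI subsetI)
  fix z assume z: "z \<in> (\<Inter>n. {a + b | a b. a \<in> P n \<and> b \<in> Q n})"
  define C where "C n = P n \<inter> (\<lambda>b. z - b) ` Q n" for n
  have "compact (C n)" for n
    unfolding C_def using assms by (intro compact_Int compact_continuous_image continuous_intros)
  moreover have "C n \<noteq> {}" for n
  proof -
    from z obtain a b where "a \<in> P n" "b \<in> Q n" "z = a + b"
      by blast
    then have "a \<in> C n"
      unfolding C_def by (auto intro!: image_eqI[of _ _ b])
    then show ?thesis
      by blast
  qed
  moreover have "C n \<subseteq> C m" if "m \<le> n" for m n
    using lift_Suc_antimono_le[of P, OF assms(3) that] lift_Suc_antimono_le[of Q, OF assms(4) that]
    unfolding C_def by auto
  ultimately have "\<Inter>(range C) \<noteq> {}"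
    by (rule compact_nest)
  then obtain a where a: "\<And>n. a \<in> C n"
    by blast
  then have "a \<in> (\<Inter>n. P n)"
    unfolding C_def by blast
  moreover have "z - a \<in> Q n" for n
    using a[of n] unfolding C_def by auto
  moreover have "z = a + (z - a)"
    by simp
  ultimately show "z \<in> {a + b | a b. a \<in> (\<Inter>n. P n) \<and> b \<in> (\<Inter>n. Q n)}"
    by blast
qed blast

lemma suslin_sums:
  fixes A B :: "'a::euclidean_space set"
  assumes "suslin A" "suslin B"
  shows "suslin {a + b | a b. a \<in> A \<and> b \<in> B}"
proof -
  obtain K where K: "\<And>s. compact (K s)" "\<And>\<sigma> n. K (seq_prefix \<sigma> (Suc (Suc n))) \<subseteq> K (seq_prefix \<sigma> (Suc n))"
    and A: "A = (\<Union>\<sigma>. \<Inter>n. K (seq_prefix \<sigma> (Suc n)))"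
    using suslin_decseq_scheme[OF assms(1)] by metis
  obtain L where L: "\<And>s. compact (L s)" "\<And>\<sigma> n. L (seq_prefix \<sigma> (Suc (Suc n))) \<subseteq> L (seq_prefix \<sigma> (Suc n))"
    and B: "B = (\<Union>\<sigma>. \<Inter>n. L (seq_prefix \<sigma> (Suc n)))"
    using suslin_decseq_scheme[OF assms(2)] by metis
  define M where "M s = {a + b | a b. a \<in> K (map (fst \<circ> prod_decode) s) \<and> b \<in> L (map (snd \<circ> prod_decode) s)}"
    for s
  have branch: "(\<Inter>n. M (seq_prefix \<sigma> (Suc n))) =
      {a + b | a b. a \<in> (\<Inter>n. K (seq_prefix (fst \<circ> prod_decode \<circ> \<sigma>) (Suc n)))
                  \<and> b \<in> (\<Inter>n. L (seq_prefix (snd \<circ> prod_decode \<circ> \<sigma>) (Suc n)))}" for \<sigma>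
    unfolding M_def map_seq_prefix by (rule Inter_sums_decseq_compact) (simp_all add: K L)
  have "{a + b | a b. a \<in> A \<and> b \<in> B} = (\<Union>\<sigma>. \<Inter>n. M (seq_prefix \<sigma> (Suc n)))"
  proof (intro equalityI subsetI)
    fix z assume "z \<in> {a + b | a b. a \<in> A \<and> b \<in> B}"
    then obtain \<sigma>1 \<sigma>2 a b where "z = a + b"
      and "a \<in> (\<Inter>n. K (seq_prefix \<sigma>1 (Suc n)))" "b \<in> (\<Inter>n. L (seq_prefix \<sigma>2 (Suc n)))"
      unfolding A B by blast
    moreover define \<sigma> where "\<sigma> n = prod_encode (\<sigma>1 n, \<sigma>2 n)" for n
    moreover have "fst \<circ> prod_decode \<circ> \<sigma> = \<sigma>1" "snd \<circ> prod_decode \<circ> \<sigma> = \<sigma>2"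
      by (auto simp: \<sigma>_def fun_eq_iff)
    ultimately have "z \<in> (\<Inter>n. M (seq_prefix \<sigma> (Suc n)))"
      unfolding branch by blast
    then show "z \<in> (\<Union>\<sigma>. \<Inter>n. M (seq_prefix \<sigma> (Suc n)))"
      by blast
  next
    fix z assume "z \<in> (\<Union>\<sigma>. \<Inter>n. M (seq_prefix \<sigma> (Suc n)))"
    then show "z \<in> {a + b | a b. a \<in> A \<and> b \<in> B}"
      unfolding branch A B by blast
  qed
  moreover have "compact (M s)" for s
    unfolding M_def using K L by (auto intro: compact_sums)
  ultimately show ?thesis
    unfolding suslin_def by blast
qed

lemma suslin_closed:
  fixes F :: "'a::euclidean_space set"
  assumes "closed F"
  shows "suslin F"
proof -
  have "F = (\<Union>m::nat. F \<inter> cball 0 (real m))"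
    by (auto simp: real_arch_simple)
  moreover have "suslin (\<Union>m::nat. F \<inter> cball 0 (real m))"
    by (intro suslin_Union suslin_compact closed_Int_compact assms compact_cball)
  ultimately show ?thesis
    by simp
qed

lemma suslin_open:
  fixes S :: "'a::euclidean_space set"
  assumes "open S"
  shows "suslin S"
proof -
  obtain D where D: "countable D" "\<And>X. X \<in> D \<Longrightarrow> \<exists>a b. X = cbox a b" "\<Union>D = S"
    using open_countable_Union_open_cbox[OF assms] by metis
  show ?thesis
  proof (cases "D = {}")
    case True
    then show ?thesis
      using D(3) by (auto intro: suslin_compact)
  next
    case False
    then have "S = (\<Union>n. from_nat_into D n)"
      using D(1,3) by (simp add: range_from_nat_into)
    moreover have "compact (from_nat_into D n)" for n
      using D(2)[OF from_nat_into[OF False, of n]] by auto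
    ultimately show ?thesis
      by (simp add: suslin_Union suslin_compact)
  qed
qed

lemma suslin_borel:
  fixes S :: "'a::euclidean_space set"
  assumes "S \<in> sets borel"
  shows "suslin S"
proof -
  have "S \<in> sigma_sets UNIV {S. open S}"
    using assms by (simp add: sets_borel)
  then have "suslin S \<and> suslin (- S)"
  proof induct
    case (Basic a)
    then show ?case
      by (simp add: suslin_open suslin_closed closed_Compl)
  next
    case Empty
    then show ?case
      by (simp add: suslin_compact suslin_closed)
  next
    case (Compl a)
    then show ?case
      by (simp add: Compl_eq_Diff_UNIV[symmetric])
  next
    case (Union a)
    then have "suslin (\<Union>i. a i)" "suslin (\<Inter>i. - a i)"
      by (auto intro: suslin_Union suslin_Inter)
    then show ?case
      by simp
  qed
  then show ?thesis ..
qed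

section \<open>Lebesgue measurability of Suslin sets\<close>

definition bounded_seqs :: "(nat \<Rightarrow> nat) \<Rightarrow> nat \<Rightarrow> (nat \<Rightarrow> nat) set" where
  "bounded_seqs b k = {\<sigma>. \<forall>i<k. \<sigma> i \<le> b i}"

definition bounded_lists :: "(nat \<Rightarrow> nat) \<Rightarrow> nat \<Rightarrow> nat list set" where
  "bounded_lists b k = {u. length u = k \<and> (\<forall>i<k. u ! i \<le> b i)}"

lemma seq_prefix_in_bounded_lists: "\<sigma> \<in> bounded_seqs b k \<Longrightarrow> seq_prefix \<sigma> k \<in> bounded_lists b k"
  by (simp add: bounded_seqs_def bounded_lists_def seq_prefix_def)

lemma take_in_bounded_lists: "u \<in> bounded_lists b k \<Longrightarrow> j \<le> k \<Longrightarrow> take j u \<in> bounded_lists b j"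
  by (simp add: bounded_lists_def)

lemma finite_bounded_lists: "finite (bounded_lists b k)"
proof (rule finite_subset)
  show "bounded_lists b k \<subseteq> {u. set u \<subseteq> {..sum b {..<k}} \<and> length u = k}"
  proof
    fix u assume "u \<in> bounded_lists b k"
    moreover have "b i \<le> sum b {..<k}" if "i < k" for i
      using that by (intro member_le_sum) auto
    ultimately show "u \<in> {u. set u \<subseteq> {..sum b {..<k}} \<and> length u = k}"
      by (auto simp: bounded_lists_def in_set_conv_nth) (meson order_trans)
  qed
qed (intro finite_lists_length_eq finite_atMost)

lemma bounded_seqs_eq_UN_fun_upd: "bounded_seqs \<beta> k = (\<Union>c. bounded_seqs (\<beta>(k := c)) (Suc k))"
proof (intro equalityI subsetI)
  fix \<sigma> assume \<sigma>: "\<sigma> \<in> bounded_seqs \<beta> k"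
  have "\<sigma> i \<le> (\<beta>(k := \<sigma> k)) i" if "i < Suc k" for i
    using that \<sigma> by (cases "i = k") (auto simp: bounded_seqs_def)
  then have "\<sigma> \<in> bounded_seqs (\<beta>(k := \<sigma> k)) (Suc k)"
    by (simp add: bounded_seqs_def)
  then show "\<sigma> \<in> (\<Union>c. bounded_seqs (\<beta>(k := c)) (Suc k))"
    by blast
next
  fix \<sigma> assume "\<sigma> \<in> (\<Union>c. bounded_seqs (\<beta>(k := c)) (Suc k))"
  then obtain c where \<sigma>: "\<forall>i<Suc k. \<sigma> i \<le> (\<beta>(k := c)) i"
    by (auto simp: bounded_seqs_def)
  have "\<sigma> i \<le> \<beta> i" if "i < k" for i
    using \<sigma>[rule_format, of i] that by simp
  then show "\<sigma> \<in> bounded_seqs \<beta> k"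
    by (simp add: bounded_seqs_def)
qed

lemma bounded_seqs_fun_upd_mono:
  assumes "m \<le> n"
  shows "bounded_seqs (\<beta>(k := m)) (Suc k) \<subseteq> bounded_seqs (\<beta>(k := n)) (Suc k)"
proof
  fix \<sigma> assume \<sigma>: "\<sigma> \<in> bounded_seqs (\<beta>(k := m)) (Suc k)"
  have "\<sigma> i \<le> (\<beta>(k := n)) i" if "i < Suc k" for i
    using \<sigma> that assms by (cases "i = k") (auto simp: bounded_seqs_def)
  then show "\<sigma> \<in> bounded_seqs (\<beta>(k := n)) (Suc k)"
    by (simp add: bounded_seqs_def)
qed

lemma outer_measure_of_bounded_seqs_extend:
  assumes "\<And>\<sigma>. S \<sigma> \<subseteq> space M" and "t < outer_measure_of M (\<Union>\<sigma>\<in>bounded_seqs \<beta> k. S \<sigma>)"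
  shows "\<exists>c. t < outer_measure_of M (\<Union>\<sigma>\<in>bounded_seqs (\<beta>(k := c)) (Suc k). S \<sigma>)"
proof -
  let ?A = "\<lambda>c. \<Union>\<sigma>\<in>bounded_seqs (\<beta>(k := c)) (Suc k). S \<sigma>"
  have "incseq ?A"
    unfolding incseq_def by (blast dest: bounded_seqs_fun_upd_mono)
  moreover have "(\<Union>c. ?A c) = (\<Union>\<sigma>\<in>bounded_seqs \<beta> k. S \<sigma>)"
    unfolding bounded_seqs_eq_UN_fun_upd[of \<beta> k] by blast
  ultimately have "(SUP c. outer_measure_of M (?A c)) = outer_measure_of M (\<Union>\<sigma>\<in>bounded_seqs \<beta> k. S \<sigma>)"
    using SUP_outer_measure_of_incseq[of ?A M] assms(1) by fastforce
  with assms(2) have "t < (SUP c. outer_measure_of M (?A c))"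
    by simp
  then show ?thesis
    unfolding less_SUP_iff by blast
qed

lemma outer_measure_of_bounded_seqs:
  assumes "\<And>\<sigma>. S \<sigma> \<subseteq> space M" and "t < outer_measure_of M (\<Union>\<sigma>. S \<sigma>)"
  shows "\<exists>b. \<forall>k. t < outer_measure_of M (\<Union>\<sigma>\<in>bounded_seqs b k. S \<sigma>)"
proof -
  let ?P = "\<lambda>k \<beta>. t < outer_measure_of M (\<Union>\<sigma>\<in>bounded_seqs \<beta> k. S \<sigma>)"
  have "\<exists>\<beta>s. \<forall>k. ?P k (\<beta>s k) \<and> (\<forall>i<k. \<beta>s (Suc k) i = \<beta>s k i)"
  proof (rule dependent_nat_choice)
    show "\<exists>\<beta>. ?P 0 \<beta>"
      using assms(2) by (simp add: bounded_seqs_def)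
    show "\<exists>\<beta>'. ?P (Suc k) \<beta>' \<and> (\<forall>i<k. \<beta>' i = \<beta> i)" if "?P k \<beta>" for \<beta> k
      using outer_measure_of_bounded_seqs_extend[OF assms(1) that] by force
  qed
  then obtain \<beta>s where \<beta>s: "\<And>k. ?P k (\<beta>s k)" and agree: "\<And>k i. i < k \<Longrightarrow> \<beta>s (Suc k) i = \<beta>s k i"
    by blast
  \<comment> \<open>The bounds chosen at successive stages agree on their common indices, so they assemble into one \<open>b\<close>.\<close>
  define b where "b i = \<beta>s (Suc i) i" for i
  have "\<beta>s k i = b i" if "i < k" for i k
    using that by (induction k) (auto simp: b_def agree less_Suc_eq)
  then have "bounded_seqs (\<beta>s k) k = bounded_seqs b k" for k
    by (auto simp: bounded_seqs_def)
  with \<beta>s have "\<forall>k. t < outer_measure_of M (\<Union>\<sigma>\<in>bounded_seqs b k. S \<sigma>)"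
    by simp
  then show ?thesis
    by blast
qed

definition extendable :: "(nat \<Rightarrow> nat) \<Rightarrow> (nat list \<Rightarrow> bool) \<Rightarrow> nat list \<Rightarrow> bool" where
  "extendable b P s \<longleftrightarrow>
     (\<forall>k\<ge>length s. \<exists>u\<in>bounded_lists b k. take (length s) u = s \<and> (\<forall>j\<le>k. P (take j u)))"

lemma extendable_snoc:
  assumes "extendable b P s"
  shows "\<exists>c. extendable b P (s @ [c])"
proof (rule ccontr)
  define n where "n = length s"
  assume "\<nexists>c. extendable b P (s @ [c])"
  then have "\<forall>c. \<exists>k\<ge>Suc n. \<not> (\<exists>u\<in>bounded_lists b k. take (Suc n) u = s @ [c] \<and> (\<forall>j\<le>k. P (take j u)))"
    unfolding extendable_def n_def by auto
  then obtain kk where kk: "\<And>c. Suc n \<le> kk c"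
    "\<And>c. \<not> (\<exists>u\<in>bounded_lists b (kk c). take (Suc n) u = s @ [c] \<and> (\<forall>j\<le>kk c. P (take j u)))"
    by metis
  \<comment> \<open>Only the finitely many children \<open>c \<le> b n\<close> matter, so a single length \<open>k0\<close> defeats all of them.\<close>
  define k0 where "k0 = Suc n + sum kk {..b n}"
  have "length s \<le> k0"
    by (simp add: k0_def n_def)
  with assms obtain u where u: "u \<in> bounded_lists b k0" "take n u = s" "\<forall>j\<le>k0. P (take j u)"
    unfolding extendable_def n_def by blast
  define c where "c = u ! n"
  have "n < k0"
    by (simp add: k0_def)
  with u(1) have "c \<le> b n"
    by (simp add: c_def bounded_lists_def)
  then have "kk c \<le> k0"
    unfolding k0_def by (intro trans_le_add2 member_le_sum) auto
  then have "take (kk c) u \<in> bounded_lists b (kk c)" "\<forall>j\<le>kk c. P (take j (take (kk c) u))"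
    using u(1,3) by (auto intro: take_in_bounded_lists)
  moreover have "take (Suc n) (take (kk c) u) = s @ [c]"
    using kk(1)[of c] \<open>n < k0\<close> u(1,2) by (simp add: bounded_lists_def min_def take_Suc_conv_app_nth c_def)
  ultimately show False
    using kk(2)[of c] by blast
qed

text \<open>Koenig's lemma for the finitely branching tree of index sequences bounded by \<open>b\<close>.\<close>

lemma bounded_tree_has_branch:
  assumes "\<And>k. \<exists>u\<in>bounded_lists b k. \<forall>j\<le>k. P (take j u)"
  shows "\<exists>\<sigma>. \<forall>n. P (seq_prefix \<sigma> n)"
proof -
  have "\<exists>L. \<forall>n. (extendable b P (L n) \<and> length (L n) = n) \<and> (\<exists>c. L (Suc n) = L n @ [c])"
  proof (rule dependent_nat_choice)
    show "\<exists>s. extendable b P s \<and> length s = 0"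
      using assms by (auto simp: extendable_def)
    show "\<exists>s'. (extendable b P s' \<and> length s' = Suc n) \<and> (\<exists>c. s' = s @ [c])"
      if "extendable b P s \<and> length s = n" for s n
      using that extendable_snoc by fastforce
  qed
  then obtain L where L: "\<And>n. extendable b P (L n)" "\<And>n. length (L n) = n" "\<And>n. \<exists>c. L (Suc n) = L n @ [c]"
    by blast
  define \<sigma> where "\<sigma> i = L (Suc i) ! i" for i
  have L_seq_prefix: "L n = seq_prefix \<sigma> n" for n
  proof (induction n)
    case 0
    then show ?case
      using L(2)[of 0] by (simp add: seq_prefix_def)
  next
    case (Suc n)
    obtain c where "L (Suc n) = L n @ [c]"
      using L(3) by blast
    moreover from this have "\<sigma> n = c"
      using L(2)[of n] by (simp add: \<sigma>_def nth_append)
    ultimately show ?case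
      using Suc by (simp add: seq_prefix_def)
  qed
  have "P (L n)" for n
  proof -
    from L(1)[of n, unfolded extendable_def, rule_format, of n] L(2)[of n]
    obtain u where "u \<in> bounded_lists b n" "take n u = L n" "P (take n u)"
      by auto
    then show ?thesis
      by (simp add: bounded_lists_def)
  qed
  then show ?thesis
    by (auto simp: L_seq_prefix)
qed

lemma prefix_Int_take: "1 \<le> j \<Longrightarrow> prefix_Int K s \<subseteq> prefix_Int K (take j s)"
  unfolding prefix_Int_def by (auto simp: min_def)

lemma UN_bounded_seqs_subset_prefix_Int:
  "(\<Union>\<sigma>\<in>bounded_seqs b (Suc k). \<Inter>n. K (seq_prefix \<sigma> (Suc n))) \<subseteq> (\<Union>s\<in>bounded_lists b (Suc k). prefix_Int K s)"
proof
  fix x assume "x \<in> (\<Union>\<sigma>\<in>bounded_seqs b (Suc k). \<Inter>n. K (seq_prefix \<sigma> (Suc n)))"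
  then obtain \<sigma> where "\<sigma> \<in> bounded_seqs b (Suc k)" "x \<in> (\<Inter>n. K (seq_prefix \<sigma> (Suc n)))"
    by blast
  then have "seq_prefix \<sigma> (Suc k) \<in> bounded_lists b (Suc k)" "x \<in> prefix_Int K (seq_prefix \<sigma> (Suc k))"
    using suslin_prefix_Int[of K \<sigma>] by (auto intro: seq_prefix_in_bounded_lists)
  then show "x \<in> (\<Union>s\<in>bounded_lists b (Suc k). prefix_Int K s)"
    by blast
qed

lemma UN_bounded_lists_prefix_Int_Suc_subset:
  assumes "1 \<le> k"
  shows "(\<Union>s\<in>bounded_lists b (Suc k). prefix_Int K s) \<subseteq> (\<Union>s\<in>bounded_lists b k. prefix_Int K s)"
proof
  fix x assume "x \<in> (\<Union>s\<in>bounded_lists b (Suc k). prefix_Int K s)"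
  then obtain s where s: "s \<in> bounded_lists b (Suc k)" "x \<in> prefix_Int K s"
    by blast
  have "take k s \<in> bounded_lists b k"
    using s(1) le_SucI[OF order_refl] by (rule take_in_bounded_lists)
  moreover have "x \<in> prefix_Int K (take k s)"
    using prefix_Int_take[OF assms] s(2) by (rule subsetD)
  ultimately show "x \<in> (\<Union>s\<in>bounded_lists b k. prefix_Int K s)"
    by (rule UN_I)
qed

lemma Inter_UN_bounded_lists_prefix_Int_subset:
  "(\<Inter>k. \<Union>s\<in>bounded_lists b (Suc k). prefix_Int K s) \<subseteq> (\<Union>\<sigma>. \<Inter>n. K (seq_prefix \<sigma> (Suc n)))"
proof
  fix x assume x: "x \<in> (\<Inter>k. \<Union>s\<in>bounded_lists b (Suc k). prefix_Int K s)"
  have "\<exists>u\<in>bounded_lists b k. \<forall>j\<le>k. take j u \<noteq> [] \<longrightarrow> x \<in> K (take j u)" for k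
  proof (cases k)
    case 0
    then show ?thesis
      by (auto simp: bounded_lists_def)
  next
    case (Suc k')
    with x obtain s where s: "s \<in> bounded_lists b k" "x \<in> prefix_Int K s"
      by blast
    have "x \<in> K (take j s)" if "j \<le> k" "take j s \<noteq> []" for j
      using s that unfolding prefix_Int_def bounded_lists_def by (auto simp: Suc_le_eq)
    with s(1) show ?thesis
      by blast
  qed
  then obtain \<sigma> where "\<And>n. seq_prefix \<sigma> n \<noteq> [] \<longrightarrow> x \<in> K (seq_prefix \<sigma> n)"
    using bounded_tree_has_branch[of b "\<lambda>u. u \<noteq> [] \<longrightarrow> x \<in> K u"] by blast
  then have "x \<in> K (seq_prefix \<sigma> (Suc n))" for n
    by (metis length_seq_prefix list.size(3) nat.distinct(1))
  then show "x \<in> (\<Union>\<sigma>. \<Inter>n. K (seq_prefix \<sigma> (Suc n)))"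
    by blast
qed

lemma emeasure_Inter_decseq_ge:
  assumes "decseq F" and "\<And>k. F k \<in> fmeasurable M" and "\<And>k. t \<le> emeasure M (F k)"
  shows "t \<le> emeasure M (\<Inter>k. F k)"
proof -
  have "(INF k. emeasure M (F k)) = emeasure M (\<Inter>k. F k)"
  proof (rule INF_emeasure_decseq'[OF _ assms(1)])
    show "F k \<in> sets M" for k
      using assms(2)[of k] by (rule fmeasurableD)
    show "\<exists>k. emeasure M (F k) \<noteq> \<infinity>"
      using emeasure_eq_measure2[OF assms(2)[of 0]] by (intro exI[of _ 0]) simp
  qed
  moreover have "t \<le> (INF k. emeasure M (F k))"
    using assms(3) by (rule INF_greatest)
  ultimately show ?thesis
    by simp
qed

lemma suslin_closed_inner:
  fixes E :: "'a::euclidean_space set"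
  assumes "suslin E" and "t < outer_measure_of lebesgue E"
  obtains C where "closed C" "C \<subseteq> E" "t \<le> emeasure lebesgue C"
proof -
  obtain K where K: "\<And>s. compact (K s)" and E: "E = (\<Union>\<sigma>. \<Inter>n. K (seq_prefix \<sigma> (Suc n)))"
    using assms(1) unfolding suslin_def by blast
  have "\<And>\<sigma>. (\<Inter>n. K (seq_prefix \<sigma> (Suc n))) \<subseteq> space lebesgue"
    by simp
  moreover have "t < outer_measure_of lebesgue (\<Union>\<sigma>. \<Inter>n. K (seq_prefix \<sigma> (Suc n)))"
    using assms(2) by (simp add: E)
  ultimately have "\<exists>b. \<forall>k. t < outer_measure_of lebesgue (\<Union>\<sigma>\<in>bounded_seqs b k. \<Inter>n. K (seq_prefix \<sigma> (Suc n)))"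
    by (rule outer_measure_of_bounded_seqs[of "\<lambda>\<sigma>. \<Inter>n. K (seq_prefix \<sigma> (Suc n))"])
  then obtain b where b: "\<And>k. t < outer_measure_of lebesgue (\<Union>\<sigma>\<in>bounded_seqs b k. \<Inter>n. K (seq_prefix \<sigma> (Suc n)))"
    by blast
  \<comment> \<open>Only finitely many prefixes are bounded by \<open>b\<close>, so \<open>F k\<close> is compact, yet it still covers every branch bounded by \<open>b\<close>.\<close>
  define F where "F k = (\<Union>s\<in>bounded_lists b (Suc k). prefix_Int K s)" for k
  have F_lmeasurable: "F k \<in> lmeasurable" for k
    unfolding F_def by (intro lmeasurable_compact compact_UN finite_bounded_lists compact_prefix_Int K)
  have t_le_F: "t \<le> emeasure lebesgue (F k)" for k
  proof -
    have "t < outer_measure_of lebesgue (\<Union>\<sigma>\<in>bounded_seqs b (Suc k). \<Inter>n. K (seq_prefix \<sigma> (Suc n)))"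
      by (rule b)
    also have "\<dots> \<le> outer_measure_of lebesgue (F k)"
      unfolding F_def by (intro outer_measure_of_mono UN_bounded_seqs_subset_prefix_Int)
    also have "\<dots> = emeasure lebesgue (F k)"
      using F_lmeasurable by (simp add: fmeasurableD)
    finally show ?thesis
      by simp
  qed
  define C where "C = (\<Inter>k. F k)"
  have "closed C"
    unfolding C_def F_def
    by (intro closed_INT ballI compact_imp_closed compact_UN finite_bounded_lists compact_prefix_Int K)
  moreover have "C \<subseteq> E"
    unfolding C_def F_def E by (rule Inter_UN_bounded_lists_prefix_Int_subset)
  moreover have "t \<le> emeasure lebesgue C"
  proof -
    have "F (Suc k) \<subseteq> F k" for k
      unfolding F_def by (rule UN_bounded_lists_prefix_Int_Suc_subset) simp
    then have "decseq F"
      by (simp add: decseq_Suc_iff)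
    then show ?thesis
      unfolding C_def using F_lmeasurable t_le_F by (rule emeasure_Inter_decseq_ge)
  qed
  ultimately show ?thesis
    by (rule that)
qed

lemma sets_lebesgue_inner_approx:
  fixes E H :: "'a::euclidean_space set"
  assumes H: "H \<in> lmeasurable" "E \<subseteq> H"
    and approx: "\<And>e. e > 0 \<Longrightarrow> \<exists>D\<in>sets lebesgue. D \<subseteq> E \<and> measure lebesgue H \<le> measure lebesgue D + e"
  shows "E \<in> sets lebesgue"
proof -
  have "\<forall>n. \<exists>D\<in>sets lebesgue. D \<subseteq> E \<and> measure lebesgue H \<le> measure lebesgue D + 1 / Suc n"
    using approx by simp
  then obtain D where D: "\<And>n. D n \<in> sets lebesgue" "\<And>n. D n \<subseteq> E"
    and D_measure: "\<And>n. measure lebesgue H \<le> measure lebesgue (D n) + 1 / Suc n"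
    by metis
  have D_lmeasurable: "D n \<in> lmeasurable" for n
    using fmeasurableI2[OF H(1), of "D n"] D H(2) by blast
  have "negligible (E - (\<Union>n. D n))"
    unfolding negligible_outer_le
  proof (intro allI impI)
    fix e :: real assume "e > 0"
    then obtain n where n: "inverse (real (Suc n)) < e"
      using reals_Archimedean by blast
    have "measure lebesgue (H - D n) = measure lebesgue H - measure lebesgue (D n)"
      using H D_lmeasurable D(2) by (intro measure_Diff) (auto simp: fmeasurable_def)
    also have "\<dots> \<le> e"
      using D_measure[of n] n by (simp add: inverse_eq_divide)
    finally have "measure lebesgue (H - D n) \<le> e" .
    moreover have "E - (\<Union>n. D n) \<subseteq> H - D n"
      using H(2) by blast
    moreover have "H - D n \<in> lmeasurable"
      using H(1) D(1) by (rule fmeasurable_Diff)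
    ultimately show "\<exists>T. E - (\<Union>n. D n) \<subseteq> T \<and> T \<in> lmeasurable \<and> measure lebesgue T \<le> e"
      by blast
  qed
  then have "E - (\<Union>n. D n) \<in> sets lebesgue"
    by (rule negligible_imp_sets)
  moreover have "(\<Union>n. D n) \<in> sets lebesgue"
    using D(1) by blast
  moreover have "E = (\<Union>n. D n) \<union> (E - (\<Union>n. D n))"
    using D(2) by blast
  ultimately show ?thesis
    by (metis sets.Un)
qed

lemma outer_measure_of_bounded_attain:
  fixes E :: "'a::euclidean_space set"
  assumes "bounded E"
  obtains H where "H \<in> lmeasurable" "E \<subseteq> H" "outer_measure_of lebesgue E = measure lebesgue H"
proof -
  obtain r where "\<forall>x\<in>E. norm x \<le> r"
    using assms bounded_iff by blast
  then have "E \<subseteq> cball 0 r"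
    by auto
  obtain H where H: "H \<in> sets lebesgue" "E \<subseteq> H" "outer_measure_of lebesgue E = emeasure lebesgue H"
    using outer_measure_of_attain[of E lebesgue] by auto
  define H' where "H' = H \<inter> cball 0 r"
  have "H' \<in> lmeasurable"
    unfolding H'_def by (rule fmeasurableI2[OF lmeasurable_cball]) (auto intro: H(1))
  moreover have "E \<subseteq> H'"
    using H(2) \<open>E \<subseteq> cball 0 r\<close> by (auto simp: H'_def)
  moreover have "outer_measure_of lebesgue E = measure lebesgue H'"
  proof -
    have "outer_measure_of lebesgue E \<le> emeasure lebesgue H'"
      using outer_measure_of_mono[OF \<open>E \<subseteq> H'\<close>, of lebesgue] fmeasurableD[OF \<open>H' \<in> lmeasurable\<close>] by simp
    moreover have "emeasure lebesgue H' \<le> outer_measure_of lebesgue E"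
      unfolding H(3) H'_def using H(1) by (intro emeasure_mono) auto
    ultimately show ?thesis
      using \<open>H' \<in> lmeasurable\<close> by (simp add: emeasure_eq_measure2)
  qed
  ultimately show ?thesis
    by (rule that)
qed

lemma sets_lebesgue_suslin_bounded:
  fixes E :: "'a::euclidean_space set"
  assumes "suslin E" and "bounded E"
  shows "E \<in> sets lebesgue"
proof -
  obtain H where H: "H \<in> lmeasurable" "E \<subseteq> H" and outer_E: "outer_measure_of lebesgue E = measure lebesgue H"
    using assms(2) by (rule outer_measure_of_bounded_attain)
  show ?thesis
  proof (rule sets_lebesgue_inner_approx[OF H])
    fix e :: real assume "e > 0"
    show "\<exists>D\<in>sets lebesgue. D \<subseteq> E \<and> measure lebesgue H \<le> measure lebesgue D + e"
    proof (cases "measure lebesgue H \<le> e")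
      case True
      then show ?thesis
        by (intro bexI[of _ "{}"]) auto
    next
      case False
      with \<open>e > 0\<close> have "ennreal (measure lebesgue H - e) < outer_measure_of lebesgue E"
        unfolding outer_E by (intro ennreal_lessI) auto
      with assms(1) obtain C where C: "closed C" "C \<subseteq> E" "ennreal (measure lebesgue H - e) \<le> emeasure lebesgue C"
        by (rule suslin_closed_inner)
      have "C \<in> sets lebesgue"
        using C(1) by (metis borel_closed sets_completionI_sets sets_lborel)
      then have "C \<in> lmeasurable"
        using fmeasurableI2[OF H(1), of C] C(2) H(2) by blast
      with C(3) have "measure lebesgue H - e \<le> measure lebesgue C"
        by (simp add: emeasure_eq_measure2)
      with C(2) \<open>C \<in> sets lebesgue\<close> show ?thesis
        by (intro bexI[of _ C]) auto
    qed
  qed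
qed

lemma suslin_Int_compact:
  fixes E :: "'a::euclidean_space set"
  assumes "suslin E" and "compact B"
  shows "suslin (E \<inter> B)"
proof -
  obtain K where K: "\<And>s. compact (K s)" and E: "E = (\<Union>\<sigma>. \<Inter>n. K (seq_prefix \<sigma> (Suc n)))"
    using assms(1) unfolding suslin_def by blast
  have "E \<inter> B = (\<Union>\<sigma>. \<Inter>n. K (seq_prefix \<sigma> (Suc n)) \<inter> B)"
    unfolding E by blast
  moreover have "compact (K s \<inter> B)" for s
    using K assms(2) by (rule compact_Int)
  ultimately show ?thesis
    unfolding suslin_def by (intro exI[of _ "\<lambda>s. K s \<inter> B"]) simp
qed

lemma sets_lebesgue_suslin:
  fixes E :: "'a::euclidean_space set"
  assumes "suslin E"
  shows "E \<in> sets lebesgue"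
proof -
  have "E \<inter> cball 0 (real m) \<in> sets lebesgue" for m :: nat
    using assms by (intro sets_lebesgue_suslin_bounded suslin_Int_compact) auto
  then have "(\<Union>m::nat. E \<inter> cball 0 (real m)) \<in> sets lebesgue"
    by blast
  moreover have "(\<Union>m::nat. E \<inter> cball 0 (real m)) = E"
  proof (intro equalityI subsetI)
    fix x assume "x \<in> E"
    moreover obtain m :: nat where "norm x \<le> real m"
      using real_arch_simple by blast
    ultimately show "x \<in> (\<Union>m::nat. E \<inter> cball 0 (real m))"
      by auto
  qed blast
  ultimately show ?thesis
    by simp
qed

lemma sets_lebesgue_sums_borel:
  fixes A B :: "'a::euclidean_space set"
  assumes "A \<in> sets borel" and "B \<in> sets borel"
  shows "{a + b | a b. a \<in> A \<and> b \<in> B} \<in> sets lebesgue"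
  using assms by (intro sets_lebesgue_suslin suslin_sums suslin_borel)

section \<open>Luxemburg norms of reciprocals\<close>

lemma down_closed_eq_atMost_or_lessThan:
  fixes D :: "'a::complete_linorder set"
  assumes "\<And>x d. x \<le> d \<Longrightarrow> d \<in> D \<Longrightarrow> x \<in> D"
  shows "D = {..Sup D} \<or> D = {..<Sup D}"
proof (cases "Sup D \<in> D")
  case True
  then have "D = {..Sup D}"
    using assms by (auto intro: Sup_upper)
  then show ?thesis ..
next
  case False
  have "D = {..<Sup D}"
  proof (intro equalityI subsetI)
    fix x assume "x \<in> D"
    with False show "x \<in> {..<Sup D}"
      using Sup_upper[of x D] by (auto simp: order.order_iff_strict)
  next
    fix x assume "x \<in> {..<Sup D}"
    then obtain d where "d \<in> D" "x < d"
      by (auto simp: less_Sup_iff)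
    then show "x \<in> D"
      using assms by (meson less_imp_le)
  qed
  then show ?thesis ..
qed

lemma borel_measurable_mono_complete_linorder:
  fixes \<phi> :: "'a::{complete_linorder,linorder_topology} \<Rightarrow> 'b::{linorder_topology,second_countable_topology}"
  assumes "mono \<phi>"
  shows "\<phi> \<in> borel_measurable borel"
proof (rule borel_measurableI_less)
  fix y
  define D where "D = {x. \<phi> x < y}"
  define s where "s = Sup D"
  have "D = {..s} \<or> D = {..<s}"
    unfolding s_def
  proof (rule down_closed_eq_atMost_or_lessThan)
    show "x \<in> D" if "x \<le> d" "d \<in> D" for x d
      using that assms unfolding D_def mono_def by (auto intro: le_less_trans)
  qed
  then have "D \<in> sets borel"
    by auto
  then show "{x \<in> space borel. \<phi> x < y} \<in> sets borel"
    by (simp add: D_def)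
qed

lemma nn_integral_lebesgue_translate:
  fixes u :: "'a::euclidean_space \<Rightarrow> ennreal"
  assumes "u \<in> borel_measurable lebesgue"
  shows "(\<integral>\<^sup>+x. u (x + t) \<partial>lebesgue) = (\<integral>\<^sup>+x. u x \<partial>lebesgue)"
proof -
  have translation: "(\<lambda>x. t + (\<Sum>j\<in>Basis. (1 * (x \<bullet> j)) *\<^sub>R j)) = (\<lambda>x::'a. t + x)"
    by (simp add: euclidean_representation)
  have "lebesgue = distr lebesgue lebesgue (\<lambda>x::'a. t + x)"
    using lebesgue_affine_euclidean[of "\<lambda>_. 1" t] unfolding translation by (simp add: density_1)
  then have "(\<integral>\<^sup>+x. u x \<partial>lebesgue) = (\<integral>\<^sup>+x. u x \<partial>distr lebesgue lebesgue (\<lambda>x::'a. t + x))"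
    by simp
  also have "\<dots> = (\<integral>\<^sup>+x. u (t + x) \<partial>lebesgue)"
    using lebesgue_affine_measurable[of "\<lambda>_. 1" t] assms unfolding translation
    by (intro nn_integral_distr) simp_all
  finally show ?thesis
    by (simp add: add.commute)
qed

lemma mult_Inf_ennreal:
  fixes c :: ennreal
  assumes "c \<noteq> 0" "c \<noteq> top"
  shows "c * Inf A = (INF a\<in>A. c * a)"
proof (cases "A = {}")
  case True
  with assms(1) show ?thesis
    by (simp add: ennreal_mult_top)
next
  case False
  have "mono ((*) c)"
    by (simp add: mono_def mult_left_mono)
  moreover have "continuous (at_right (Inf A)) ((*) c)"
    unfolding continuous_within using assms(2) by (intro ennreal_tendsto_cmult tendsto_ident_at) (simp add: less_top)
  ultimately show ?thesis
    using False by (rule continuous_at_Inf_mono) simp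
qed

lemma recip_antimono: "0 \<le> a \<Longrightarrow> a \<le> b \<Longrightarrow> recip b \<le> recip a"
  unfolding recip_def by (intro e2ennreal_mono ereal_inverse_antimono)

lemma recip_ereal: "0 < v \<Longrightarrow> recip (ereal v) = ennreal (1 / v)"
  unfolding recip_def by (simp add: inverse_eq_divide)

lemma recip_infinity [simp]: "recip \<infinity> = 0"
  unfolding recip_def by simp (simp only: zero_ereal_def e2ennreal_ereal ennreal_0)

lemma borel_measurable_recip [measurable (raw)]:
  "h \<in> borel_measurable M \<Longrightarrow> (\<lambda>x. recip (h x)) \<in> borel_measurable M"
  unfolding recip_def by measurable

lemma ex_le_one_div_add_inverse_Suc:
  fixes v y :: real
  assumes "0 \<le> v" "0 < y" "y * v < 1"
  shows "\<exists>n. y \<le> 1 / (v + 1 / Suc n)"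
proof -
  from assms have "0 < (1 - y * v) / y"
    by simp
  then obtain n where "inverse (real (Suc n)) < (1 - y * v) / y"
    using reals_Archimedean by blast
  with assms(2) have "y * (1 / Suc n) < 1 - y * v"
    by (simp add: inverse_eq_divide less_divide_eq mult_ac)
  then have "y * (v + 1 / Suc n) < 1"
    by (simp add: algebra_simps)
  moreover have "0 < v + 1 / Suc n"
    using assms(1) by (simp add: add_nonneg_pos)
  ultimately have "y \<le> 1 / (v + 1 / Suc n)"
    by (simp add: le_divide_eq)
  then show ?thesis ..
qed

lemma half_recip_le_SUP:
  fixes z :: ereal
  assumes "0 \<le> z"
  shows "ennreal (1 / 2) * recip z \<le> (SUP n. recip (2 * z + ereal (1 / Suc n)))"
proof (cases z)
  case PInf
  then show ?thesis
    by simp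
next
  case MInf
  with assms show ?thesis
    by simp
next
  case (real u)
  with assms have "0 \<le> u"
    by simp
  show ?thesis
  proof (rule dense_le)
    fix y assume y: "y < ennreal (1 / 2) * recip z"
    then have "y \<noteq> top"
      by (metis leD top_greatest)
    then obtain y' where y': "y = ennreal y'" "0 \<le> y'"
      by (cases y) auto
    have "y' * (2 * u) < 1"
    proof (cases "u = 0")
      case False
      with \<open>0 \<le> u\<close> have "ennreal (1 / 2) * recip z = ennreal (1 / 2) * ennreal (1 / u)"
        using real by (simp add: recip_ereal)
      also have "\<dots> = ennreal (1 / (2 * u))"
        using \<open>0 \<le> u\<close> by (subst ennreal_mult''[symmetric]) auto
      finally have "y' < 1 / (2 * u)"
        using y y' by (simp add: ennreal_less_iff)
      with False \<open>0 \<le> u\<close> show ?thesis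
        by (simp add: less_divide_eq mult_ac)
    qed simp
    show "y \<le> (SUP n. recip (2 * z + ereal (1 / Suc n)))"
    proof (cases "y' = 0")
      case False
      with y'(2) \<open>0 \<le> u\<close> \<open>y' * (2 * u) < 1\<close> obtain n where "y' \<le> 1 / (2 * u + 1 / Suc n)"
        using ex_le_one_div_add_inverse_Suc[of "2 * u" y'] by auto
      then have "y \<le> recip (2 * z + ereal (1 / Suc n))"
        using real \<open>0 \<le> u\<close> y'(1) by (simp add: recip_ereal add_nonneg_pos ennreal_leI)
      also have "\<dots> \<le> (SUP n. recip (2 * z + ereal (1 / Suc n)))"
        by (rule SUP_upper) simp
      finally show ?thesis .
    qed (use y' in simp)
  qed
qed

lemma young_half_recip_le_SUP:
  assumes "young \<phi>" "0 \<le> z" "0 < r"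
  shows "\<phi> (ennreal (1 / (2 * r)) * recip z) \<le> (SUP n. \<phi> (ennreal (1 / r) * recip (2 * z + ereal (1 / Suc n))))"
proof -
  from assms(1) have mono: "mono \<phi>" and left_cont: "\<And>x. continuous (at_left x) \<phi>"
    unfolding young_def by auto
  have "ennreal (1 / (2 * r)) * recip z = ennreal (1 / r) * ennreal (1 / 2) * recip z"
    using assms(3) by (subst ennreal_mult''[symmetric]) (auto simp: mult.commute)
  also have "\<dots> \<le> ennreal (1 / r) * (SUP n. recip (2 * z + ereal (1 / Suc n)))"
    unfolding mult.assoc by (intro mult_left_mono half_recip_le_SUP assms(2)) simp
  also have "\<dots> = (SUP n. ennreal (1 / r) * recip (2 * z + ereal (1 / Suc n)))"
    by (simp add: SUP_mult_left_ennreal)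
  finally have "\<phi> (ennreal (1 / (2 * r)) * recip z) \<le> \<phi> (SUP n. ennreal (1 / r) * recip (2 * z + ereal (1 / Suc n)))"
    by (rule monoD[OF mono])
  also have "\<dots> = (SUP n. \<phi> (ennreal (1 / r) * recip (2 * z + ereal (1 / Suc n))))"
    using continuous_at_Sup_mono[OF mono left_cont, of "range (\<lambda>n. ennreal (1 / r) * recip (2 * z + ereal (1 / Suc n)))"]
    by (simp add: image_image)
  finally show ?thesis .
qed

lemma luxemburg_le_double:
  fixes u h :: "'a::euclidean_space \<Rightarrow> ennreal"
  assumes "\<And>r. 0 < r \<Longrightarrow> (\<integral>\<^sup>+x. \<phi> (ennreal (1 / r) * h x) \<partial>lebesgue) \<le> 1 \<Longrightarrow>
      (\<integral>\<^sup>+x. \<phi> (ennreal (1 / (2 * r)) * u x) \<partial>lebesgue) \<le> 1"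
  shows "luxemburg \<phi> u \<le> 2 * luxemburg \<phi> h"
proof -
  define R where "R = {r::real. r > 0 \<and> (\<integral>\<^sup>+x. \<phi> (ennreal (1 / r) * h x) \<partial>lebesgue) \<le> 1}"
  have "luxemburg \<phi> u \<le> (INF r\<in>R. 2 * ennreal r)"
  proof (rule INF_greatest)
    fix r assume "r \<in> R"
    then have "0 < r" "2 * r \<in> {r. r > 0 \<and> (\<integral>\<^sup>+x. \<phi> (ennreal (1 / r) * u x) \<partial>lebesgue) \<le> 1}"
      using assms by (auto simp: R_def)
    then have "luxemburg \<phi> u \<le> ennreal (2 * r)"
      unfolding luxemburg_def by (blast intro: Inf_lower)
    with \<open>0 < r\<close> show "luxemburg \<phi> u \<le> 2 * ennreal r"
      by (simp add: ennreal_mult)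
  qed
  also have "\<dots> = 2 * luxemburg \<phi> h"
    unfolding luxemburg_def R_def[symmetric] by (simp add: mult_Inf_ennreal image_image)
  finally show ?thesis .
qed

lemma nn_integral_young_recip_le_of_translates:
  fixes F k :: "'a::euclidean_space \<Rightarrow> ereal"
  assumes "young \<phi>"
    and [measurable]: "F \<in> borel_measurable lebesgue" "k \<in> borel_measurable lebesgue"
    and F_nonneg: "\<And>x. 0 \<le> F x" and k_nonneg: "\<And>x. 0 \<le> k x"
    and translate: "\<And>e. 0 < e \<Longrightarrow> \<exists>t. \<forall>x. k (x + t) \<le> 2 * F x + ereal e"
    and "0 < r" and modular_k: "(\<integral>\<^sup>+x. \<phi> (ennreal (1 / r) * recip (k x)) \<partial>lebesgue) \<le> 1"
  shows "(\<integral>\<^sup>+x. \<phi> (ennreal (1 / (2 * r)) * recip (F x)) \<partial>lebesgue) \<le> 1"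
proof -
  from assms(1) have mono: "mono \<phi>"
    unfolding young_def by auto
  have [measurable]: "\<phi> \<in> borel_measurable borel"
    using mono by (rule borel_measurable_mono_complete_linorder)
  define H where "H n x = ennreal (1 / r) * recip (2 * F x + ereal (1 / Suc n))" for n x
  have modular_H: "(\<integral>\<^sup>+x. \<phi> (H n x) \<partial>lebesgue) \<le> 1" for n
  proof -
    obtain t where t: "\<And>x. k (x + t) \<le> 2 * F x + ereal (1 / Suc n)"
      using translate[of "1 / Suc n"] by auto
    have "H n x \<le> ennreal (1 / r) * recip (k (x + t))" for x
      unfolding H_def by (intro mult_left_mono recip_antimono k_nonneg t) simp
    then have "(\<integral>\<^sup>+x. \<phi> (H n x) \<partial>lebesgue) \<le> (\<integral>\<^sup>+x. \<phi> (ennreal (1 / r) * recip (k (x + t))) \<partial>lebesgue)"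
      by (intro nn_integral_mono monoD[OF mono])
    also have "\<dots> = (\<integral>\<^sup>+x. \<phi> (ennreal (1 / r) * recip (k x)) \<partial>lebesgue)"
      by (rule nn_integral_lebesgue_translate[where u="\<lambda>x. \<phi> (ennreal (1 / r) * recip (k x))"]) measurable
    finally show ?thesis
      using modular_k by simp
  qed
  have "incseq (\<lambda>n x. \<phi> (H n x))"
  proof (intro monoI le_funI monoD[OF mono])
    fix n m :: nat and x assume "n \<le> m"
    then have "2 * F x + ereal (1 / Suc m) \<le> 2 * F x + ereal (1 / Suc n)"
      by (intro add_left_mono) (simp add: frac_le)
    moreover have "0 \<le> 2 * F x + ereal (1 / Suc m)"
      using F_nonneg[of x] by simp
    ultimately show "H n x \<le> H m x"
      unfolding H_def by (intro mult_left_mono recip_antimono) simp_all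
  qed
  have "(\<integral>\<^sup>+x. \<phi> (ennreal (1 / (2 * r)) * recip (F x)) \<partial>lebesgue) \<le> (\<integral>\<^sup>+x. (SUP n. \<phi> (H n x)) \<partial>lebesgue)"
    unfolding H_def using assms(1) F_nonneg \<open>0 < r\<close> by (intro nn_integral_mono young_half_recip_le_SUP)
  also have "\<dots> = (SUP n. \<integral>\<^sup>+x. \<phi> (H n x) \<partial>lebesgue)"
    using \<open>incseq (\<lambda>n x. \<phi> (H n x))\<close> by (rule nn_integral_monotone_convergence_SUP) (simp add: H_def)
  also have "\<dots> \<le> 1"
    using modular_H by (rule SUP_least)
  finally show ?thesis .
qed

lemma luxemburg_recip_le_of_translates:
  fixes F k :: "'a::euclidean_space \<Rightarrow> ereal"
  assumes "young \<phi>"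
    and "F \<in> borel_measurable lebesgue" "k \<in> borel_measurable lebesgue"
    and "\<And>x. 0 \<le> F x" "\<And>x. 0 \<le> k x"
    and "\<And>e. 0 < e \<Longrightarrow> \<exists>t. \<forall>x. k (x + t) \<le> 2 * F x + ereal e"
  shows "luxemburg \<phi> (\<lambda>x. recip (F x)) \<le> 2 * luxemburg \<phi> (\<lambda>x. recip (k x))"
  using assms by (intro luxemburg_le_double nn_integral_young_recip_le_of_translates)

section \<open>The infimal max-convolution\<close>

lemma maxconv_le: "maxconv f g x \<le> max (f (x - y)) (g y)"
  unfolding maxconv_def by (rule INF_lower) simp

lemma maxconv_nonneg: "(\<And>y. 0 \<le> g y) \<Longrightarrow> 0 \<le> maxconv f g x"
  unfolding maxconv_def by (rule INF_greatest) (auto intro: max.coboundedI2)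

lemma maxconv_less_eq_sums:
  "{x. maxconv f g x < c} = {a + b | a b. a \<in> {x. f x < c} \<and> b \<in> {x. g x < c}}"
proof (intro equalityI subsetI)
  fix x assume "x \<in> {x. maxconv f g x < c}"
  then obtain y where "max (f (x - y)) (g y) < c"
    by (auto simp: maxconv_def INF_less_iff)
  moreover have "x = (x - y) + y"
    by simp
  ultimately show "x \<in> {a + b | a b. a \<in> {x. f x < c} \<and> b \<in> {x. g x < c}}"
    by fastforce
next
  fix x assume "x \<in> {a + b | a b. a \<in> {x. f x < c} \<and> b \<in> {x. g x < c}}"
  then obtain a b where "x = a + b" "f a < c" "g b < c"
    by blast
  then have "max (f (x - b)) (g b) < c"
    by simp
  with maxconv_le[of f g x b] have "maxconv f g x < c"
    by (rule le_less_trans)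
  then show "x \<in> {x. maxconv f g x < c}"
    by simp
qed

lemma borel_measurable_maxconv:
  fixes f g :: "'a::euclidean_space \<Rightarrow> ereal"
  assumes [measurable]: "f \<in> borel_measurable borel" "g \<in> borel_measurable borel"
  shows "maxconv f g \<in> borel_measurable lebesgue"
proof (rule borel_measurableI_less)
  fix c
  have "{x. maxconv f g x < c} \<in> sets lebesgue"
    unfolding maxconv_less_eq_sums by (rule sets_lebesgue_sums_borel) measurable
  then show "{x \<in> space lebesgue. maxconv f g x < c} \<in> sets lebesgue"
    by simp
qed

lemma INF_ereal_nonneg_finite:
  fixes h :: "'a \<Rightarrow> ereal"
  assumes "\<And>x. 0 \<le> h x" and "h x0 \<noteq> \<infinity>"
  shows "\<exists>a\<ge>0. (INF x. h x) = ereal a"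
proof -
  have "0 \<le> (INF x. h x)"
    using assms(1) by (rule INF_greatest)
  moreover have "h x0 < \<infinity>"
    using assms(2) by (cases "h x0") auto
  with INF_lower[OF UNIV_I, of h x0] have "(INF x. h x) < \<infinity>"
    by (rule le_less_trans)
  ultimately show ?thesis
    by (cases "INF x. h x") auto
qed

lemma ereal_minus_half_diff: "z - ereal ((a - c) / 2) = z + ereal ((c - a) / 2)"
proof -
  have "- ((a - c) / 2) = (c - a) / 2"
    by (simp add: field_simps)
  then show ?thesis
    by (simp only: minus_ereal_def uminus_ereal.simps)
qed

lemma INF_add_half_diff_nonneg:
  fixes u :: "'a \<Rightarrow> ereal"
  assumes "(INF x. u x) = ereal \<alpha>" "0 \<le> \<alpha>" "0 \<le> \<beta>"
  shows "0 \<le> u x + ereal ((\<beta> - \<alpha>) / 2)"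
proof -
  have "ereal \<alpha> \<le> u x"
    using INF_lower[OF UNIV_I, of u x] assms(1) by simp
  then show ?thesis
  proof (cases "u x")
    case (real p)
    with \<open>ereal \<alpha> \<le> u x\<close> assms(2,3) have "0 \<le> p + (\<beta> - \<alpha>) / 2"
      by (simp add: field_simps)
    with real show ?thesis
      by simp
  qed auto
qed

lemma max_le_double_add_half_diff:
  fixes y w z :: ereal
  assumes "ereal \<alpha> \<le> z" "0 \<le> \<alpha>" "0 \<le> \<beta>" "0 \<le> e" and "y \<le> z" "w \<le> ereal (\<beta> + e)"
  shows "max y w \<le> 2 * (z + ereal ((\<beta> - \<alpha>) / 2)) + ereal e"
proof (cases z)
  case (real p)
  with assms(1) have "\<alpha> \<le> p"
    by simp
  with assms(2-4) have "p \<le> 2 * (p + (\<beta> - \<alpha>) / 2) + e" and "\<beta> + e \<le> 2 * (p + (\<beta> - \<alpha>) / 2) + e"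
    by (simp_all add: field_simps)
  with real assms(5,6) show ?thesis
    by (auto intro: order_trans)
qed (use assms in auto)

lemma translate_bound_of_INF:
  fixes u v k :: "'a::ab_group_add \<Rightarrow> ereal"
  assumes "(INF x. v x) = ereal \<beta>" "\<And>x. ereal \<alpha> \<le> u x" "0 \<le> \<alpha>" "0 \<le> \<beta>"
    and "\<And>x t. k (x + t) \<le> max (u x) (v t)" and "0 < e"
  shows "\<exists>t. \<forall>x. k (x + t) \<le> 2 * (u x + ereal ((\<beta> - \<alpha>) / 2)) + ereal e"
proof -
  have "(INF x. v x) < ereal (\<beta> + e)"
    using assms(1,6) by simp
  then obtain t where "v t < ereal (\<beta> + e)"
    by (auto simp: INF_less_iff)
  then have "k (x + t) \<le> 2 * (u x + ereal ((\<beta> - \<alpha>) / 2)) + ereal e" for x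
    using assms(2-6) max_le_double_add_half_diff[of \<alpha> "u x" \<beta> e "u x" "v t"]
    by (meson less_imp_le order_refl order_trans)
  then show ?thesis
    by blast
qed

lemma luxemburg_recip_le_of_INF:
  fixes u v k :: "'a::euclidean_space \<Rightarrow> ereal"
  assumes "young \<phi>" "u \<in> borel_measurable lebesgue" "k \<in> borel_measurable lebesgue" "\<And>x. 0 \<le> k x"
    and "(INF x. u x) = ereal \<alpha>" "(INF x. v x) = ereal \<beta>" "0 \<le> \<alpha>" "0 \<le> \<beta>"
    and "\<And>x t. k (x + t) \<le> max (u x) (v t)"
  shows "luxemburg \<phi> (\<lambda>x. recip (u x + ereal ((\<beta> - \<alpha>) / 2))) \<le> 2 * luxemburg \<phi> (\<lambda>x. recip (k x))"
proof (rule luxemburg_recip_le_of_translates[OF assms(1) _ assms(3) _ assms(4)])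
  show "(\<lambda>x. u x + ereal ((\<beta> - \<alpha>) / 2)) \<in> borel_measurable lebesgue"
    using assms(2) by measurable
  show "0 \<le> u x + ereal ((\<beta> - \<alpha>) / 2)" for x
    using assms(5,7,8) by (rule INF_add_half_diff_nonneg)
  show "\<exists>t. \<forall>x. k (x + t) \<le> 2 * (u x + ereal ((\<beta> - \<alpha>) / 2)) + ereal e" if "0 < e" for e
  proof (rule translate_bound_of_INF[OF assms(6) _ assms(7,8,9) that])
    show "ereal \<alpha> \<le> u x" for x
      using INF_lower[OF UNIV_I, of u x] assms(5) by simp
  qed
qed

theorem corollary8:
  fixes f g :: "'a::euclidean_space \<Rightarrow> ereal"
  assumes f_meas: "f \<in> borel_measurable borel"
    and g_meas: "g \<in> borel_measurable borel"
    and g_nonneg: "\<forall>x. 0 \<le> g x"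
    and f_not_inf: "\<exists>x. f x \<noteq> \<infinity>"
    and g_not_inf: "\<exists>x. g x \<noteq> \<infinity>"
  defines "mfp \<equiv> (INF x. max (f x) 0)"
    and "mg \<equiv> (INF x. g x)"
  defines "m \<equiv> (mfp - mg) / 2"
  shows "(0 \<le> mfp + mg \<and> mfp + mg < \<infinity>) \<and>
     (\<lambda>x. max (f x) 0 - m) \<in> borel_measurable lebesgue \<and>
     (\<lambda>x. g x + m) \<in> borel_measurable lebesgue \<and>
     maxconv f g \<in> borel_measurable lebesgue \<and>
     (\<forall>x. 0 \<le> max (f x) 0 - m) \<and>
     (\<forall>x. 0 \<le> g x + m) \<and>
     (\<forall>x. 0 \<le> maxconv f g x) \<and>
     (\<forall>\<phi>. young \<phi> \<longrightarrow>
           luxemburg \<phi> (\<lambda>x. recip (max (f x) 0 - m)) + luxemburg \<phi> (\<lambda>x. recip (g x + m))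
             \<le> 4 * luxemburg \<phi> (\<lambda>x. recip (maxconv f g x)))"
proof -
  have [measurable]: "f \<in> borel_measurable lebesgue" "g \<in> borel_measurable lebesgue"
    using f_meas g_meas by (auto intro: measurable_completion)
  obtain x0 y0 where "f x0 \<noteq> \<infinity>" "g y0 \<noteq> \<infinity>"
    using f_not_inf g_not_inf by blast
  then have "max (f x0) 0 \<noteq> \<infinity>"
    by (simp add: max_def)
  then obtain a where a: "mfp = ereal a" "0 \<le> a"
    unfolding mfp_def using INF_ereal_nonneg_finite[of "\<lambda>x. max (f x) 0" x0] by auto
  obtain c where c: "mg = ereal c" "0 \<le> c"
    unfolding mg_def using INF_ereal_nonneg_finite[of g y0] g_nonneg \<open>g y0 \<noteq> \<infinity>\<close> by auto
  have "m = ereal ((a - c) / 2)"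
    by (simp add: m_def a c)
  then have F_eq: "max (f x) 0 - m = max (f x) 0 + ereal ((c - a) / 2)"
    and G_eq: "g x + m = g x + ereal ((a - c) / 2)" for x
    by (simp_all only: ereal_minus_half_diff)
  note INF_f = a(1)[unfolded mfp_def] and INF_g = c(1)[unfolded mg_def]
  have nonneg: "0 \<le> max (f x) 0 - m" "0 \<le> g x + m" "0 \<le> maxconv f g x" for x
    unfolding F_eq G_eq using INF_add_half_diff_nonneg[OF INF_f a(2) c(2)] INF_add_half_diff_nonneg[OF INF_g c(2) a(2)]
    by (auto intro: maxconv_nonneg simp: g_nonneg)
  have measurable: "(\<lambda>x. max (f x) 0 - m) \<in> borel_measurable lebesgue" "(\<lambda>x. g x + m) \<in> borel_measurable lebesgue"
    "maxconv f g \<in> borel_measurable lebesgue"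
    using f_meas g_meas by (auto intro: borel_measurable_maxconv)
  have K_le: "maxconv f g (x + t) \<le> max (max (f x) 0) (g t)"
    and K_le': "maxconv f g (x + t) \<le> max (g x) (max (f t) 0)" for x t
    using maxconv_le[of f g "x + t" t] maxconv_le[of f g "x + t" x] by (auto simp: le_max_iff_disj)
  have lux: "luxemburg \<phi> (\<lambda>x. recip (max (f x) 0 - m)) \<le> 2 * luxemburg \<phi> (\<lambda>x. recip (maxconv f g x))"
    "luxemburg \<phi> (\<lambda>x. recip (g x + m)) \<le> 2 * luxemburg \<phi> (\<lambda>x. recip (maxconv f g x))" if "young \<phi>" for \<phi>
    unfolding F_eq G_eq
    by (rule luxemburg_recip_le_of_INF[OF that _ measurable(3) nonneg(3) INF_f INF_g a(2) c(2) K_le], measurable,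
        rule luxemburg_recip_le_of_INF[OF that _ measurable(3) nonneg(3) INF_g INF_f c(2) a(2) K_le'], measurable)
  have "luxemburg \<phi> (\<lambda>x. recip (max (f x) 0 - m)) + luxemburg \<phi> (\<lambda>x. recip (g x + m))
      \<le> 4 * luxemburg \<phi> (\<lambda>x. recip (maxconv f g x))" if "young \<phi>" for \<phi>
    using add_mono[OF lux[OF that]] by (simp add: distrib_right[symmetric])
  with a c measurable nonneg show ?thesis
    by simp
qed

end
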